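(* Let $k\ge 2$ and let $W\in\mathcal W^2_{3\times(3k+1)}$ be such that each of its three rows contains exactly $2k+1$ filled cells (equivalently $e(W[1])=e(W[2])=e(W[3])=1/3$). Then the multiset of lengths of the maximal horizontal pillars of the middle row $W[2]$ is either $\{2,2,\dots,2,1\}$ ($k$ parts equal to $2$ and one part equal to $1$) or $\{3,2,\dots,2,1,1\}$ (one part $3$, $k-2$ parts $2$, and two parts $1$).
   Context: A 2-dimensional binary word of dimensions $h\times w$ is an $h\times w$ matrix with entries in $\{\square,\blacksquare\}$ (filled cells $\blacksquare$, empty cells $\square$); $|U|_\blacksquare$ is the number of filled cells of $U$. Two cells $(i,j),(i',j')$ are adjacent if $|i-i'|+|j-j'|=1$; the degree of a filled cell is the number of filled cells adjacent to it. $\mathcal W^2_{h\times w}$ is the set of $h\times w$ binary words in which every filled cell has degree at most $2$. $W[i]$ denotes row $i$ of $W$. The excess of an $a\times b$ word $U$ is $e(U)=|U|_\blacksquare-2ab/3$. A maximal horizontal pillar of a row is a maximal run of consecutive filled cells in that row. *)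

theory Defs
  imports Main "HOL-Library.Multiset"
begin

text \<open>An h x w binary word is modelled as a predicate W :: nat => nat => bool,
 where W i j (for i < h, j < w, 0-indexed) means cell (i,j) is filled.
 Values outside the grid are irrelevant.\<close>

definition cells :: "nat \<Rightarrow> nat \<Rightarrow> (nat \<times> nat) set" where
  "cells h w = {(i, j). i < h \<and> j < w}"

definition adjacent :: "nat \<times> nat \<Rightarrow> nat \<times> nat \<Rightarrow> bool" where
  "adjacent p q = (nat \<bar>int (fst p) - int (fst q)\<bar> + nat \<bar>int (snd p) - int (snd q)\<bar> = 1)"

definition degree :: "nat \<Rightarrow> nat \<Rightarrow> (nat \<Rightarrow> nat \<Rightarrow> bool) \<Rightarrow> nat \<times> nat \<Rightarrow> nat" where
  "degree h w W p = card {q \<in> cells h w. W (fst q) (snd q) \<and> adjacent p q}"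

definition W2 :: "nat \<Rightarrow> nat \<Rightarrow> (nat \<Rightarrow> nat \<Rightarrow> bool) \<Rightarrow> bool" where
  "W2 h w W = (\<forall>p \<in> cells h w. W (fst p) (snd p) \<longrightarrow> degree h w W p \<le> 2)"

definition row_count :: "nat \<Rightarrow> (nat \<Rightarrow> nat \<Rightarrow> bool) \<Rightarrow> nat \<Rightarrow> nat" where
  "row_count w W i = card {j. j < w \<and> W i j}"

definition pillars :: "nat \<Rightarrow> (nat \<Rightarrow> nat \<Rightarrow> bool) \<Rightarrow> nat \<Rightarrow> (nat \<times> nat) set" where
  "pillars w W i = {(a, b). a < b \<and> b \<le> w \<and> (\<forall>j. a \<le> j \<and> j < b \<longrightarrow> W i j)
      \<and> (a = 0 \<or> \<not> W i (a - 1)) \<and> (b = w \<or> \<not> W i b)}"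

definition pillar_lengths :: "nat \<Rightarrow> (nat \<Rightarrow> nat \<Rightarrow> bool) \<Rightarrow> nat \<Rightarrow> nat multiset" where
  "pillar_lengths w W i = image_mset (\<lambda>(a, b). b - a) (mset_set (pillars w W i))"

end

theory Submission
  imports Defs
begin

(* The degree bound at a filled middle cell allows its column at most 3 filled cells minus
   the number of its filled horizontal neighbours, and a column with an empty middle cell
   holds at most 2. Summing over the columns, the 6k + 3 filled cells force every column to
   attain this bound and the middle row, padded by an empty cell at each end, to contain no
   two adjacent empty cells. So the middle row consists of k + 1 pillars separated by single
   empty cells, of total length 2k + 1. An interior pillar of length 1 would have its column
   and both neighbouring columns full above it, giving the top cell over it degree 3; hence at
   most two pillars have length 1, and the two multisets of the statement are the only ones
   left. *)

section \<open>Maximal pillars of a row\<close>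

lemma pillar_through:
  assumes "j < n" "W i j"
  obtains a b where "(a, b) \<in> pillars n W i" "a \<le> j" "j < b"
proof -
  define run_to_j where "run_to_j a \<longleftrightarrow> (\<forall>l. a \<le> l \<and> l \<le> j \<longrightarrow> W i l)" for a
  define run_end where "run_end b \<longleftrightarrow> j < b \<and> b \<le> n \<and> (b = n \<or> \<not> W i b)" for b
  define a where "a = (LEAST a. run_to_j a)"
  define b where "b = (LEAST b. run_end b)"
  have "run_to_j j" unfolding run_to_j_def using assms(2) by (metis le_antisym)
  then have "run_to_j a" "a \<le> j" unfolding a_def by (rule LeastI, rule Least_le)
  have "a = 0 \<or> \<not> W i (a - 1)"
  proof (rule ccontr)
    assume *: "\<not> (a = 0 \<or> \<not> W i (a - 1))"
    have "run_to_j (a - 1)"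
      using \<open>run_to_j a\<close> * unfolding run_to_j_def
      by (metis diff_le_self le_antisym not_less_eq_eq Suc_pred' neq0_conv)
    then have "a \<le> a - 1" unfolding a_def by (rule Least_le)
    with * show False by (cases a) auto
  qed
  have "run_end n" unfolding run_end_def using assms(1) by simp
  then have "run_end b" unfolding b_def by (rule LeastI)
  have "W i l" if "a \<le> l" "l < b" for l
  proof (cases "l \<le> j")
    case False
    have "\<not> run_end l" using \<open>l < b\<close> unfolding b_def by (rule not_less_Least)
    with False \<open>run_end b\<close> \<open>l < b\<close> show ?thesis unfolding run_end_def by auto
  qed (use \<open>run_to_j a\<close> that run_to_j_def in auto)
  with \<open>run_end b\<close> \<open>a \<le> j\<close> \<open>a = 0 \<or> _\<close> have "(a, b) \<in> pillars n W i"
    unfolding pillars_def run_end_def by auto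
  with \<open>a \<le> j\<close> \<open>run_end b\<close> that show ?thesis unfolding run_end_def by blast
qed

lemma pillars_finite: "finite (pillars n W i)"
  by (rule finite_subset[of _ "{..n} \<times> {..n}"]) (auto simp: pillars_def)

lemma pillar_filled: "(a, b) \<in> pillars n W i \<Longrightarrow> a \<le> j \<Longrightarrow> j < b \<Longrightarrow> W i j"
  by (simp add: pillars_def)

lemma pillar_start_unique:
  assumes "(a, b) \<in> pillars n W i" "(a, b') \<in> pillars n W i"
  shows "b = b'"
proof (rule ccontr)
  assume "b \<noteq> b'"
  then consider "b < b'" | "b' < b" by linarith
  then show False by cases (use assms in \<open>auto simp: pillars_def\<close>)
qed

lemma pillar_end_unique:
  assumes "(a, b) \<in> pillars n W i" "(a', b) \<in> pillars n W i"
  shows "a = a'"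
proof (rule ccontr)
  assume "a \<noteq> a'"
  then consider "a < a'" | "a' < a" by linarith
  then show False
  proof cases
    case 1
    with assms have "W i (a' - 1)" by (intro pillar_filled[OF assms(1)]) (auto simp: pillars_def)
    with 1 assms(2) show False by (simp add: pillars_def)
  next
    case 2
    with assms have "W i (a - 1)" by (intro pillar_filled[OF assms(2)]) (auto simp: pillars_def)
    with 2 assms(1) show False by (simp add: pillars_def)
  qed
qed

lemma pillar_starts:
  "fst ` pillars n W i = {a. a < n \<and> W i a \<and> (a = 0 \<or> \<not> W i (a - 1))}"
proof (intro equalityI subsetI)
  fix a assume "a \<in> {a. a < n \<and> W i a \<and> (a = 0 \<or> \<not> W i (a - 1))}"
  then have a: "a < n" "W i a" "a = 0 \<or> \<not> W i (a - 1)" by auto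
  obtain a' b where p: "(a', b) \<in> pillars n W i" "a' \<le> a" "a < b"
    using a(1,2) by (rule pillar_through)
  have "a' = a"
  proof (rule ccontr)
    assume "a' \<noteq> a"
    with p have "W i (a - 1)" by (intro pillar_filled[OF p(1)]) auto
    with a \<open>a' \<noteq> a\<close> p(2) show False by auto
  qed
  with p show "a \<in> fst ` pillars n W i" by force
qed (auto simp: pillars_def)

lemma pillar_ends:
  "snd ` pillars n W i = {b. 0 < b \<and> b \<le> n \<and> W i (b - 1) \<and> (b = n \<or> \<not> W i b)}"
proof (intro equalityI subsetI)
  fix b assume "b \<in> {b. 0 < b \<and> b \<le> n \<and> W i (b - 1) \<and> (b = n \<or> \<not> W i b)}"
  then have b: "0 < b" "b \<le> n" "W i (b - 1)" "b = n \<or> \<not> W i b" by auto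
  then obtain a b' where p: "(a, b') \<in> pillars n W i" "a \<le> b - 1" "b - 1 < b'"
    by (metis diff_less less_le_trans zero_less_one pillar_through)
  have "b' = b"
  proof (rule ccontr)
    assume "b' \<noteq> b"
    with p(3) have "b < b'" by linarith
    with p have "W i b" "b < n" unfolding pillars_def by auto
    with b show False by auto
  qed
  with p show "b \<in> snd ` pillars n W i" by force
qed (auto simp: pillars_def)

lemma size_pillar_lengths: "size (pillar_lengths n W i) = card (fst ` pillars n W i)"
proof -
  have "inj_on fst (pillars n W i)"
    by (rule inj_onI) (metis prod.collapse pillar_start_unique)
  then show ?thesis by (simp add: pillar_lengths_def card_image pillars_finite)
qed

lemma sum_pillar_lengths:
  "sum_mset (pillar_lengths n W i) = \<Sum>(snd ` pillars n W i) - \<Sum>(fst ` pillars n W i)"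
proof -
  let ?P = "pillars n W i"
  have "inj_on fst ?P" by (rule inj_onI) (metis prod.collapse pillar_start_unique)
  moreover have "inj_on snd ?P" by (rule inj_onI) (metis prod.collapse pillar_end_unique)
  moreover have "fst p \<le> snd p" if "p \<in> ?P" for p using that by (auto simp: pillars_def)
  ultimately show ?thesis
    unfolding pillar_lengths_def sum_unfold_sum_mset[symmetric]
    by (simp add: case_prod_beta sum_subtractf_nat sum.reindex)
qed

lemma pillar_lengths_pos:
  assumes "x \<in># pillar_lengths n W i" shows "1 \<le> x"
proof -
  from assms obtain a b where "(a, b) \<in> pillars n W i" "x = b - a"
    by (auto simp: pillar_lengths_def pillars_finite)
  then show ?thesis by (auto simp: pillars_def)
qed

lemma pillar_lengths_of_gapless_row:
  assumes "W i 0" "W i m" "\<forall>j<m. W i j \<or> W i (Suc j)"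
  defines "E \<equiv> {j. j < Suc m \<and> \<not> W i j}"
  shows "size (pillar_lengths (Suc m) W i) = Suc (card E)"
    and "sum_mset (pillar_lengths (Suc m) W i) = Suc m - card E"
proof -
  have "finite E" unfolding E_def by simp
  have succ_filled: "e < m" "W i (Suc e)" if "e \<in> E" for e
  proof -
    from that have "e < Suc m" "\<not> W i e" unfolding E_def by auto
    with assms(2) show "e < m" by (cases "e = m") auto
    with assms(3) \<open>\<not> W i e\<close> show "W i (Suc e)" by blast
  qed
  have pred_filled: "0 < e" "W i (e - 1)" if "e \<in> E" for e
  proof -
    from that have "\<not> W i e" unfolding E_def by auto
    with assms(1) show "0 < e" by (cases e) auto
    moreover have "e - 1 < m" using succ_filled(1)[OF that] by simp
    with assms(3) have "W i (e - 1) \<or> W i (Suc (e - 1))" by blast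
    ultimately show "W i (e - 1)" using \<open>\<not> W i e\<close> by simp
  qed
  have starts: "fst ` pillars (Suc m) W i = insert 0 (Suc ` E)"
  proof (intro equalityI subsetI)
    fix a assume "a \<in> fst ` pillars (Suc m) W i"
    then have "a < Suc m" "a = 0 \<or> \<not> W i (a - 1)" unfolding pillar_starts by auto
    then have "a = 0 \<or> a - 1 \<in> E \<and> a = Suc (a - 1)" unfolding E_def by auto
    then show "a \<in> insert 0 (Suc ` E)" by blast
  next
    fix a assume "a \<in> insert 0 (Suc ` E)"
    then consider "a = 0" | e where "e \<in> E" "a = Suc e" by blast
    then show "a \<in> fst ` pillars (Suc m) W i"
    proof cases
      case 2
      with succ_filled[OF 2(1)] show ?thesis unfolding pillar_starts E_def by auto
    qed (use assms(1) in \<open>simp add: pillar_starts\<close>)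
  qed
  have ends: "snd ` pillars (Suc m) W i = insert (Suc m) E"
  proof (intro equalityI subsetI)
    fix b assume "b \<in> snd ` pillars (Suc m) W i"
    then show "b \<in> insert (Suc m) E" unfolding pillar_ends E_def by auto
  next
    fix b assume "b \<in> insert (Suc m) E"
    then consider "b = Suc m" | "b \<in> E" by blast
    then show "b \<in> snd ` pillars (Suc m) W i"
    proof cases
      case 2
      with pred_filled[OF 2] show ?thesis unfolding pillar_ends E_def by auto
    qed (use assms(2) in \<open>simp add: pillar_ends\<close>)
  qed
  show "size (pillar_lengths (Suc m) W i) = Suc (card E)"
    unfolding size_pillar_lengths starts using \<open>finite E\<close> by (simp add: card_image)
  have "Suc m \<notin> E" "0 \<notin> Suc ` E" unfolding E_def by auto
  then have "\<Sum>(insert (Suc m) E) = Suc m + \<Sum>E" "\<Sum>(insert 0 (Suc ` E)) = \<Sum>E + card E"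
    using \<open>finite E\<close> by (simp_all add: sum.reindex sum_Suc)
  then show "sum_mset (pillar_lengths (Suc m) W i) = Suc m - card E"
    unfolding sum_pillar_lengths starts ends by simp
qed

lemma count_pillar_lengths_one_le_two:
  assumes "\<forall>a. 0 < a \<and> Suc a < n \<and> W i a \<longrightarrow> W i (a - 1) \<or> W i (Suc a)"
  shows "count (pillar_lengths n W i) 1 \<le> 2"
proof -
  let ?P = "pillars n W i"
  have "{p \<in> ?P. snd p - fst p = 1} \<subseteq> {(0, 1), (n - 1, n)}"
  proof
    fix p assume "p \<in> {p \<in> ?P. snd p - fst p = 1}"
    moreover obtain a b where "p = (a, b)" by fastforce
    ultimately have "(a, b) \<in> ?P" "b = Suc a" by (auto simp: pillars_def)
    then have "a < n" "W i a" "a = 0 \<or> \<not> W i (a - 1)" "Suc a = n \<or> \<not> W i (Suc a)"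
      unfolding pillars_def by auto
    with assms have "a = 0 \<or> Suc a = n" by auto
    with \<open>p = (a, b)\<close> \<open>b = Suc a\<close> show "p \<in> {(0, 1), (n - 1, n)}" by auto
  qed
  then have "card {p \<in> ?P. snd p - fst p = 1} \<le> card {(0::nat, 1::nat), (n - 1, n)}"
    by (rule card_mono[rotated]) simp
  also have "\<dots> \<le> 2" by (rule card_insert_le_m1) auto
  finally show ?thesis
    by (simp add: pillar_lengths_def count_conv_size_mset filter_mset_image_mset pillars_finite
        case_prod_beta)
qed

section \<open>Multisets of positive integers with few ones\<close>

lemma double_size_le_sum_mset:
  "\<forall>x\<in>#N. (2::nat) \<le> x \<Longrightarrow> 2 * size N \<le> sum_mset N"
  by (induction N) auto

lemma sum_mset_eq_double_size:
  "\<forall>x\<in>#N. (2::nat) \<le> x \<Longrightarrow> sum_mset N = 2 * size N \<Longrightarrow> N = replicate_mset (size N) 2"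
proof (induction N)
  case (add x N)
  then have "x = 2" and "sum_mset N = 2 * size N"
    using double_size_le_sum_mset[of N] by auto
  then have "N = replicate_mset (size N) 2" using add.IH add.prems(1) by simp
  with \<open>x = 2\<close> show ?case by simp
qed simp

lemma sum_mset_eq_double_size_plus_one:
  "\<forall>x\<in>#N. (2::nat) \<le> x \<Longrightarrow> sum_mset N = 2 * size N + 1
    \<Longrightarrow> N = {#3#} + replicate_mset (size N - 1) 2"
proof (induction N)
  case (add x N)
  have N2: "\<forall>y\<in>#N. 2 \<le> y" and "x \<ge> 2" using add.prems(1) by simp_all
  moreover have "x + sum_mset N = 2 * size N + 3" using add.prems(2) by simp
  ultimately consider "x = 2" "sum_mset N = 2 * size N + 1" | "x = 3" "sum_mset N = 2 * size N"
    using double_size_le_sum_mset[OF N2] by linarith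
  then show ?case
  proof cases
    case 1
    then obtain s where "size N = Suc s" by (cases "size N") auto
    with 1 add.IH[OF N2] show ?thesis by simp
  next
    case 2
    with sum_mset_eq_double_size[OF N2] show ?thesis by simp
  qed
qed simp

lemma size_sum_mset_cases:
  fixes M :: "nat multiset"
  assumes pos: "\<And>x. x \<in># M \<Longrightarrow> 1 \<le> x"
    and size: "size M = k + 1" and sum: "sum_mset M = 2 * k + 1" and ones: "count M 1 \<le> 2" and "k \<ge> 2"
  shows "M = replicate_mset k 2 + {#1#} \<or> M = {#3#} + replicate_mset (k - 2) 2 + {#1, 1#}"
proof -
  define N where "N = filter_mset (\<lambda>x. x \<noteq> 1) M"
  have M: "M = replicate_mset (count M 1) 1 + N"
    unfolding N_def by (metis filter_eq_replicate_mset multiset_partition)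
  have N2: "\<forall>x\<in>#N. 2 \<le> x" using pos unfolding N_def by force
  have "size N + count M 1 = k + 1" "sum_mset N + count M 1 = 2 * k + 1"
    using size sum arg_cong[OF M, of size] arg_cong[OF M, of sum_mset] by simp_all
  with ones double_size_le_sum_mset[OF N2] consider
    "count M 1 = 1" "sum_mset N = 2 * size N" "size N = k"
    | "count M 1 = 2" "sum_mset N = 2 * size N + 1" "size N = k - 1"
    by linarith
  then show ?thesis
  proof cases
    case 1
    have "N = replicate_mset k 2"
      using sum_mset_eq_double_size[OF N2 1(2)] unfolding 1(3) .
    with M[unfolded 1(1)] show ?thesis by simp
  next
    case 2
    have "k - 1 - 1 = k - 2" by simp
    then have "N = {#3#} + replicate_mset (k - 2) 2"
      using sum_mset_eq_double_size_plus_one[OF N2 2(2)] unfolding 2(3) by (simp only:)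
    moreover have "replicate_mset 2 (1::nat) = {#1, 1#}" by (simp add: numeral_2_eq_2)
    ultimately show ?thesis using M[unfolded 2(1)] by simp
  qed
qed

section \<open>Counting filled cells column by column\<close>

lemma W2_no_three_filled_neighbours:
  assumes "W2 h w W" "p \<in> cells h w" "W (fst p) (snd p)"
    and "\<forall>q\<in>{q1, q2, q3}. q \<in> cells h w \<and> W (fst q) (snd q) \<and> adjacent p q"
    and "distinct [q1, q2, q3]"
  shows False
proof -
  have "finite (cells h w)"
    by (rule finite_subset[of _ "{..<h} \<times> {..<w}"]) (auto simp: cells_def)
  then have "card {q1, q2, q3} \<le> degree h w W p"
    unfolding degree_def using assms(4) by (intro card_mono) auto
  moreover have "degree h w W p \<le> 2" using assms(1-3) unfolding W2_def by blast
  ultimately show False using assms(5) by simp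
qed

lemma adjacent_Suc [simp]:
  "adjacent (i, j) (Suc i, j)" "adjacent (Suc i, j) (i, j)"
  "adjacent (i, j) (i, Suc j)" "adjacent (i, Suc j) (i, j)"
  by (auto simp: adjacent_def)

definition column_count :: "(nat \<Rightarrow> nat \<Rightarrow> bool) \<Rightarrow> nat \<Rightarrow> int" where
  "column_count W j = of_bool (W 0 j) + of_bool (W 1 j) + of_bool (W 2 j)"

(* The bound on the filled cells of column j imposed by the degree condition at (1, j). *)
definition middle_capacity :: "nat \<Rightarrow> (nat \<Rightarrow> nat \<Rightarrow> bool) \<Rightarrow> nat \<Rightarrow> int" where
  "middle_capacity n W j =
    (if W 1 j then 3 - of_bool (0 < j \<and> W 1 (j - 1)) - of_bool (Suc j < n \<and> W 1 (Suc j)) else 2)"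

lemma column_count_le_middle_capacity:
  assumes "W2 3 n W" "j < n"
  shows "column_count W j \<le> middle_capacity n W j"
proof (cases "W 1 j")
  case True
  have cell: "(i, l) \<in> cells 3 n" if "i < 3" "l < n" for i l using that by (simp add: cells_def)
  have "(1, j) \<in> cells 3 n" using cell assms(2) by simp
  note no_three = W2_no_three_filled_neighbours[OF assms(1) this]
  have up: "adjacent (1, j) (0, j)" and down: "adjacent (1, j) (2, j)"
    using adjacent_Suc(2)[of 0 j] adjacent_Suc(1)[of 1 j] by (simp_all add: numeral_2_eq_2)
  have left: "adjacent (1, j) (1, j - 1)" if "0 < j"
    using that adjacent_Suc(4)[of 1 "j - 1"] by simp
  have right: "adjacent (1, j) (1, Suc j)" by simp
  have "j - 1 \<noteq> Suc j" by arith
  have "\<not> (W 0 j \<and> W 2 j \<and> 0 < j \<and> W 1 (j - 1))"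
    using no_three[of "(0, j)" "(2, j)" "(1, j - 1)"] up down left cell assms(2) True by auto
  moreover have "\<not> (W 0 j \<and> W 2 j \<and> Suc j < n \<and> W 1 (Suc j))"
    using no_three[of "(0, j)" "(2, j)" "(1, Suc j)"] up down right cell assms(2) True by auto
  moreover have "\<not> (W 0 j \<and> 0 < j \<and> W 1 (j - 1) \<and> Suc j < n \<and> W 1 (Suc j))"
    using no_three[of "(0, j)" "(1, j - 1)" "(1, Suc j)"] up left right cell assms(2)
      \<open>j - 1 \<noteq> Suc j\<close> True by auto
  moreover have "\<not> (W 2 j \<and> 0 < j \<and> W 1 (j - 1) \<and> Suc j < n \<and> W 1 (Suc j))"
    using no_three[of "(2, j)" "(1, j - 1)" "(1, Suc j)"] down left right cell assms(2)
      \<open>j - 1 \<noteq> Suc j\<close> True by auto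
  ultimately show ?thesis using True unfolding column_count_def middle_capacity_def by auto
qed (simp add: column_count_def middle_capacity_def)

lemma sum_neighbour_products:
  fixes x :: "nat \<Rightarrow> 'a::comm_semiring_1"
  shows "(\<Sum>j<Suc m. x j * ((if 0 < j then x (j - 1) else 0) + (if j < m then x (Suc j) else 0)))
    = 2 * (\<Sum>j<m. x j * x (Suc j))"
proof -
  have "(\<Sum>j<Suc m. x j * (if 0 < j then x (j - 1) else 0)) = (\<Sum>j<m. x j * x (Suc j))"
    by (subst sum.lessThan_Suc_shift) (simp add: mult.commute)
  moreover have "(\<Sum>j<Suc m. x j * (if j < m then x (Suc j) else 0)) = (\<Sum>j<m. x j * x (Suc j))"
    by simp
  ultimately show ?thesis by (simp add: distrib_left sum.distrib mult_2)
qed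

lemma sum_complement_products:
  fixes x :: "nat \<Rightarrow> 'a::comm_ring_1"
  shows "(\<Sum>j<m. (1 - x j) * (1 - x (Suc j)))
    = of_nat m - 2 * (\<Sum>j<Suc m. x j) + x 0 + x m + (\<Sum>j<m. x j * x (Suc j))"
proof -
  have "(1 - x j) * (1 - x (Suc j)) = 1 - x j - x (Suc j) + x j * x (Suc j)" for j
    by (simp add: algebra_simps)
  then have "(\<Sum>j<m. (1 - x j) * (1 - x (Suc j)))
      = of_nat m - (\<Sum>j<m. x j) - (\<Sum>j<m. x (Suc j)) + (\<Sum>j<m. x j * x (Suc j))"
    by (simp add: sum.distrib sum_subtractf)
  also have "\<dots> = of_nat m - ((\<Sum>j<m. x j) + x m) - (x 0 + (\<Sum>j<m. x (Suc j))) + x 0 + x m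
      + (\<Sum>j<m. x j * x (Suc j))"
    by (simp add: algebra_simps)
  also have "\<dots> = of_nat m - 2 * (\<Sum>j<Suc m. x j) + x 0 + x m + (\<Sum>j<m. x j * x (Suc j))"
    unfolding mult_2 sum.lessThan_Suc[of x m, symmetric]
      sum.lessThan_Suc_shift[of x m, symmetric] by (simp add: algebra_simps)
  finally show ?thesis .
qed

(* Adjacent pairs of empty cells in row i of width Suc m, the row being padded by an empty
   cell at each end. *)
definition empty_pairs :: "nat \<Rightarrow> (nat \<Rightarrow> nat \<Rightarrow> bool) \<Rightarrow> nat \<Rightarrow> int" where
  "empty_pairs m W i =
    of_bool (\<not> W i 0) + (\<Sum>j<m. of_bool (\<not> W i j \<and> \<not> W i (Suc j))) + of_bool (\<not> W i m)"

lemma empty_pairs_eq_0_iff: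
  "empty_pairs m W i = 0 \<longleftrightarrow> W i 0 \<and> W i m \<and> (\<forall>j<m. W i j \<or> W i (Suc j))"
proof -
  have "(\<Sum>j<m. of_bool (\<not> W i j \<and> \<not> W i (Suc j)) :: int) = 0 \<longleftrightarrow> (\<forall>j<m. W i j \<or> W i (Suc j))"
    by (subst sum_nonneg_eq_0_iff) auto
  moreover have "(\<Sum>j<m. of_bool (\<not> W i j \<and> \<not> W i (Suc j)) :: int) \<ge> 0"
    by (rule sum_nonneg) simp
  ultimately show ?thesis unfolding empty_pairs_def by (auto simp del: sum_of_bool_eq)
qed

lemma sum_middle_capacity:
  "(\<Sum>j<Suc m. middle_capacity (Suc m) W j) + 2 * empty_pairs m W 1
    = 4 * int m + 6 - 3 * (\<Sum>j<Suc m. of_bool (W 1 j))"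
proof -
  define x where "x j = (of_bool (W 1 j) :: int)" for j
  define nb where "nb j = (if 0 < j then x (j - 1) else 0) + (if j < m then x (Suc j) else 0)" for j
  have "middle_capacity (Suc m) W j = 2 + x j - x j * nb j" for j
    by (simp add: middle_capacity_def x_def nb_def)
  then have "(\<Sum>j<Suc m. middle_capacity (Suc m) W j)
      = (\<Sum>j<Suc m. 2) + (\<Sum>j<Suc m. x j) - (\<Sum>j<Suc m. x j * nb j)"
    by (simp only: sum.distrib sum_subtractf)
  also have "\<dots> = 2 * int (Suc m) + (\<Sum>j<Suc m. x j) - 2 * (\<Sum>j<m. x j * x (Suc j))"
    unfolding nb_def sum_neighbour_products by simp
  finally have "(\<Sum>j<Suc m. middle_capacity (Suc m) W j)
      = 2 * int (Suc m) + (\<Sum>j<Suc m. x j) - 2 * (\<Sum>j<m. x j * x (Suc j))" .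
  moreover have "of_bool (\<not> W 1 j \<and> \<not> W 1 (Suc j)) = (1 - x j) * (1 - x (Suc j))" for j
    by (simp add: x_def)
  then have "empty_pairs m W 1 = (1 - x 0) + (\<Sum>j<m. (1 - x j) * (1 - x (Suc j))) + (1 - x m)"
    unfolding empty_pairs_def by (simp add: x_def)
  ultimately show ?thesis
    unfolding sum_complement_products x_def[symmetric] by simp
qed

lemma row_count_eq_sum: "int (row_count n W i) = (\<Sum>j<n. of_bool (W i j))"
proof -
  have "{..<n} \<inter> {j. W i j} = {j. j < n \<and> W i j}" by auto
  then show ?thesis by (simp add: row_count_def)
qed

lemma card_empty_cells: "card {j. j < n \<and> \<not> W i j} = n - row_count n W i"
proof -
  have "{j. j < n \<and> \<not> W i j} = {..<n} - {j. j < n \<and> W i j}" by auto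
  then have "card {j. j < n \<and> \<not> W i j} = card {..<n} - card {j. j < n \<and> W i j}"
    by (simp only:) (rule card_Diff_subset, auto)
  then show ?thesis by (simp add: row_count_def)
qed

lemma balanced_rows_tight:
  assumes "W2 3 (3 * k + 1) W" and "\<forall>i<3. row_count (3 * k + 1) W i = 2 * k + 1"
  shows "empty_pairs (3 * k) W 1 = 0"
    and "\<forall>j<3 * k + 1. column_count W j = middle_capacity (3 * k + 1) W j"
proof -
  let ?n = "3 * k + 1"
  have rows: "(\<Sum>j<?n. of_bool (W i j)) = 2 * int k + 1" if "i < 3" for i
    using assms(2) that row_count_eq_sum[of ?n W i] by simp
  then have columns: "(\<Sum>j<?n. column_count W j) = 6 * int k + 3"
    unfolding column_count_def by (simp add: sum.distrib del: sum_of_bool_eq)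
  have le: "column_count W j \<le> middle_capacity ?n W j" if "j < ?n" for j
    using column_count_le_middle_capacity[OF assms(1) that] .
  have "(\<Sum>j<?n. middle_capacity ?n W j) + 2 * empty_pairs (3 * k) W 1 = 6 * int k + 3"
    using sum_middle_capacity[of "3 * k" W] rows[of 1] by simp
  moreover have "(\<Sum>j<?n. column_count W j) \<le> (\<Sum>j<?n. middle_capacity ?n W j)"
    using le by (intro sum_mono) simp
  moreover have "empty_pairs (3 * k) W 1 \<ge> 0"
    unfolding empty_pairs_def by (simp add: sum_nonneg del: sum_of_bool_eq)
  ultimately have gaps: "empty_pairs (3 * k) W 1 = 0"
    and sums: "(\<Sum>j<?n. column_count W j) = (\<Sum>j<?n. middle_capacity ?n W j)"
    using columns by linarith+
  show "empty_pairs (3 * k) W 1 = 0" by (fact gaps)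
  show "\<forall>j<?n. column_count W j = middle_capacity ?n W j"
  proof (intro allI impI)
    fix j assume "j < ?n"
    show "column_count W j = middle_capacity ?n W j"
    proof (rule ccontr)
      assume "column_count W j \<noteq> middle_capacity ?n W j"
      with le \<open>j < ?n\<close> have "(\<Sum>j<?n. column_count W j) < (\<Sum>j<?n. middle_capacity ?n W j)"
        by (intro sum_strict_mono_ex1) (auto simp: order.strict_iff_order)
      with sums show False by simp
    qed
  qed
qed

lemma tight_middle_cell_not_isolated:
  assumes "W2 3 n W" and tight: "\<forall>j<n. column_count W j = middle_capacity n W j"
    and "0 < a" "Suc a < n" "W 1 a"
  shows "W 1 (a - 1) \<or> W 1 (Suc a)"
proof (rule ccontr)
  assume isolated: "\<not> (W 1 (a - 1) \<or> W 1 (Suc a))"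
  have "column_count W a = 3" using tight assms(3-5) isolated by (simp add: middle_capacity_def)
  then have "W 0 a" by (auto simp: column_count_def of_bool_def split: if_splits)
  have "column_count W (a - 1) = 2" "column_count W (Suc a) = 2"
    using tight assms(3,4) isolated by (simp_all add: middle_capacity_def)
  then have "W 0 (a - 1)" "W 0 (Suc a)"
    using isolated by (auto simp: column_count_def of_bool_def split: if_splits)
  have cell: "(i, l) \<in> cells 3 n" if "i < 3" "l < n" for i l using that by (simp add: cells_def)
  have "adjacent (0, a) (1, a)" "adjacent (0, a) (0, Suc a)" by simp_all
  moreover have "adjacent (0, a) (0, a - 1)" using adjacent_Suc(4)[of 0 "a - 1"] assms(3) by simp
  moreover have "a - 1 \<noteq> Suc a" by arith
  ultimately show False
    using W2_no_three_filled_neighbours[OF assms(1), of "(0, a)" "(1, a)" "(0, a - 1)" "(0, Suc a)"]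
      cell assms(3-5) \<open>W 0 a\<close> \<open>W 0 (a - 1)\<close> \<open>W 0 (Suc a)\<close> by auto
qed

theorem mainTheorem12:
  fixes k :: nat and W :: "nat \<Rightarrow> nat \<Rightarrow> bool"
  assumes "k \<ge> 2"
    and "W2 3 (3 * k + 1) W"
    and "\<forall>i < 3. row_count (3 * k + 1) W i = 2 * k + 1"
  shows "pillar_lengths (3 * k + 1) W 1 = replicate_mset k 2 + {#1#}
       \<or> pillar_lengths (3 * k + 1) W 1 = {#3#} + replicate_mset (k - 2) 2 + {#1, 1#}"
proof -
  let ?L = "pillar_lengths (3 * k + 1) W 1"
  have gapless: "W 1 0" "W 1 (3 * k)" "\<forall>j<3 * k. W 1 j \<or> W 1 (Suc j)"
    using balanced_rows_tight(1)[OF assms(2,3)] by (simp_all add: empty_pairs_eq_0_iff)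
  have "card {j. j < Suc (3 * k) \<and> \<not> W 1 j} = k"
    using card_empty_cells[of "3 * k + 1" W 1] assms(3) by simp
  with pillar_lengths_of_gapless_row[where W = W and i = 1, OF gapless]
  have size: "size ?L = k + 1" and sum: "sum_mset ?L = 2 * k + 1" by simp_all
  have "count ?L 1 \<le> 2"
    using tight_middle_cell_not_isolated[OF assms(2) balanced_rows_tight(2)[OF assms(2,3)]]
    by (intro count_pillar_lengths_one_le_two) blast
  with size sum assms(1) show ?thesis by (intro size_sum_mset_cases pillar_lengths_pos)
qed

end
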